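(* Let $q$ be a prime power, $\eta\ge0$ an integer, $(\delta_T,\delta_X)\in\mathbb{Z}\times\mathbb{N}$ with $\delta=\delta_T+\eta\delta_X\ge0$. Then: (1) the map $p$ (defined in the context) induces a bijection from the quotient set $\mathcal{P}(\delta_T,\delta_X)/\equiv$ onto $\mathcal{K}(\delta_T,\delta_X)$; (2) $\mathcal{K}(\delta_T,\delta_X)$ is a set of representatives of $\mathcal{P}(\delta_T,\delta_X)$ under $\equiv$; (3) $\Delta(\delta_T,\delta_X)=\{M(\alpha,\beta):(\alpha,\beta)\in\mathcal{K}(\delta_T,\delta_X)\}$ is a set of representatives of the set of monomials of bidegree $(\delta_T,\delta_X)$ under $\equiv$.
   Context: $R=\mathbb{F}_q[T_1,T_2,X_1,X_2]$; the bidegree of $T_1^{c_1}T_2^{c_2}X_1^{d_1}X_2^{d_2}$ is $(c_1+c_2-\eta d_1,d_1+d_2)$. The Hirzebruch surface $\mathcal{H}_\eta$ is the quotient of $(\mathbb{A}^2\setminus\{0\})^2$ by $\mathbb{G}_m^2$ acting by $(\lambda,\mu)\cdot(t_1,t_2,x_1,x_2)=(\lambda t_1,\lambda t_2,\mu\lambda^{-\eta}x_1,\mu x_2)$; each $\mathbb{F}_q$-point has a unique representative of the form $(1,a,1,b)$, $(0,1,1,b)$, $(1,a,0,1)$ or $(0,1,0,1)$ ($a,b\in\mathbb{F}_q$), where polynomials are evaluated. Two monomials of bidegree $(\delta_T,\delta_X)$ are equivalent ($\equiv$) if they take the same value at every $\mathbb{F}_q$-point. $\mathcal{P}(\delta_T,\delta_X)=\{(a,b)\in\mathbb{N}^2: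 a\le\delta_X,\ \eta a+b\le\delta\}$; for $(d_2,c_2)\in\mathcal{P}(\delta_T,\delta_X)$, $M(d_2,c_2)=T_1^{\delta-\eta d_2-c_2}T_2^{c_2}X_1^{\delta_X-d_2}X_2^{d_2}$ (a bijection onto the monomials of bidegree $(\delta_T,\delta_X)$), and $(d_2,c_2)\equiv(d'_2,c'_2)$ iff $M(d_2,c_2)\equiv M(d'_2,c'_2)$. $A=\delta_X$ if $\delta_T\ge0$, $A=\delta/\eta$ if $\delta_T<0$. $\mathcal{A}_X=\{\alpha\in\mathbb{N}:\alpha\le\min(\lfloor A\rfloor,q-1)\}\cup(\{A\}\cap\mathbb{N})$, $\mathcal{K}(\delta_T,\delta_X)=\{(\alpha,\beta)\in\mathbb{N}^2:\alpha\in\mathcal{A}_X,\ \beta\le\min(\delta-\eta\alpha,q)-1\text{ or }\beta=\delta-\eta\alpha\}$. The map $p:\mathcal{P}(\delta_T,\delta_X)\to\mathcal{P}(\delta_T,\delta_X)$, $(d_2,c_2)\mapsto(d'_2,c'_2)$: $d'_2=d_2$ if $d_2=0$ or $d_2=A$, otherwise $d'_2$ is the element of $\{1,\dots,q-1\}$ congruent to $d_2$ mod $q-1$; $c'_2=0$ if $c_2=0$; $c'_2=\delta-\eta d'_2$ if $c_2=\delta-\eta d_2$; otherwise $c'_2$ is the element of $\{1,\dots,q-1\}$ congruent to $c_2$ mod $q-1$. *)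

theory Defs
  imports Complex_Main "HOL-Library.Cardinality"
begin

text \<open>The field F_q is modelled by a finite field type 'a, q = CARD('a).
 A monomial T1^c1 T2^c2 X1^d1 X2^d2 is represented by its exponent tuple (c1,c2,d1,d2).\<close>

type_synonym expo = "nat \<times> nat \<times> nat \<times> nat"

definition hdelta :: "nat \<Rightarrow> int \<Rightarrow> nat \<Rightarrow> int" where
  "hdelta \<eta> \<delta>T \<delta>X = \<delta>T + int \<eta> * int \<delta>X"

definition bideg_monos :: "nat \<Rightarrow> int \<Rightarrow> nat \<Rightarrow> expo set" where
  "bideg_monos \<eta> \<delta>T \<delta>X = {(c1,c2,d1,d2). int c1 + int c2 - int \<eta> * int d1 = \<delta>T \<and> d1 + d2 = \<delta>X}"

text \<open>Canonical representatives of the F_q-points of the Hirzebruch surface.\<close>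
definition hpoints :: "('a::field \<times> 'a \<times> 'a \<times> 'a) set" where
  "hpoints = {(1,a,1,b) | a b. True} \<union> {(0,1,1,b) | b. True} \<union> {(1,a,0,1) | a. True} \<union> {(0,1,0,1)}"

definition mon_eval :: "('a::field \<times> 'a \<times> 'a \<times> 'a) \<Rightarrow> expo \<Rightarrow> 'a" where
  "mon_eval pt m = (case pt of (t1,t2,x1,x2) \<Rightarrow> case m of (c1,c2,d1,d2) \<Rightarrow>
      t1 ^ c1 * t2 ^ c2 * x1 ^ d1 * x2 ^ d2)"

definition mequiv :: "'a::field itself \<Rightarrow> expo \<Rightarrow> expo \<Rightarrow> bool" where
  "mequiv _ m m' \<longleftrightarrow> (\<forall>pt \<in> (hpoints :: ('a \<times> 'a \<times> 'a \<times> 'a) set). mon_eval pt m = mon_eval pt m')"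

definition Pset :: "nat \<Rightarrow> int \<Rightarrow> nat \<Rightarrow> (nat \<times> nat) set" where
  "Pset \<eta> \<delta>T \<delta>X = {(a,b). a \<le> \<delta>X \<and> int \<eta> * int a + int b \<le> hdelta \<eta> \<delta>T \<delta>X}"

definition Mmon :: "nat \<Rightarrow> int \<Rightarrow> nat \<Rightarrow> nat \<times> nat \<Rightarrow> expo" where
  "Mmon \<eta> \<delta>T \<delta>X x = (case x of (d2,c2) \<Rightarrow>
     (nat (hdelta \<eta> \<delta>T \<delta>X - int \<eta> * int d2 - int c2), c2, \<delta>X - d2, d2))"

definition Pequiv :: "'a::field itself \<Rightarrow> nat \<Rightarrow> int \<Rightarrow> nat \<Rightarrow> nat \<times> nat \<Rightarrow> nat \<times> nat \<Rightarrow> bool" where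
  "Pequiv ty \<eta> \<delta>T \<delta>X x y \<longleftrightarrow> mequiv ty (Mmon \<eta> \<delta>T \<delta>X x) (Mmon \<eta> \<delta>T \<delta>X y)"

definition Arat :: "nat \<Rightarrow> int \<Rightarrow> nat \<Rightarrow> real" where
  "Arat \<eta> \<delta>T \<delta>X = (if \<delta>T \<ge> 0 then real \<delta>X else real_of_int (hdelta \<eta> \<delta>T \<delta>X) / real \<eta>)"

definition AX :: "nat \<Rightarrow> nat \<Rightarrow> int \<Rightarrow> nat \<Rightarrow> nat set" where
  "AX q \<eta> \<delta>T \<delta>X = {\<alpha>. int \<alpha> \<le> min \<lfloor>Arat \<eta> \<delta>T \<delta>X\<rfloor> (int q - 1)} \<union> {\<alpha>. real \<alpha> = Arat \<eta> \<delta>T \<delta>X}"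

definition Kset :: "nat \<Rightarrow> nat \<Rightarrow> int \<Rightarrow> nat \<Rightarrow> (nat \<times> nat) set" where
  "Kset q \<eta> \<delta>T \<delta>X = {(\<alpha>,\<beta>). \<alpha> \<in> AX q \<eta> \<delta>T \<delta>X \<and>
      (int \<beta> \<le> min (hdelta \<eta> \<delta>T \<delta>X - int \<eta> * int \<alpha>) (int q) - 1
       \<or> int \<beta> = hdelta \<eta> \<delta>T \<delta>X - int \<eta> * int \<alpha>)}"

definition redmod :: "nat \<Rightarrow> nat \<Rightarrow> nat" where
  "redmod q n = (THE x. x \<in> {1..q-1} \<and> x mod (q-1) = n mod (q-1))"

definition pmap :: "nat \<Rightarrow> nat \<Rightarrow> int \<Rightarrow> nat \<Rightarrow> nat \<times> nat \<Rightarrow> nat \<times> nat" where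
  "pmap q \<eta> \<delta>T \<delta>X x = (case x of (d2,c2) \<Rightarrow>
     let d2' = (if d2 = 0 \<or> real d2 = Arat \<eta> \<delta>T \<delta>X then d2 else redmod q d2);
         c2' = (if c2 = 0 then 0
                else if int c2 = hdelta \<eta> \<delta>T \<delta>X - int \<eta> * int d2
                     then nat (hdelta \<eta> \<delta>T \<delta>X - int \<eta> * int d2')
                else redmod q c2)
     in (d2', c2'))"

definition Prel :: "'a::field itself \<Rightarrow> nat \<Rightarrow> int \<Rightarrow> nat \<Rightarrow> ((nat \<times> nat) \<times> (nat \<times> nat)) set" where
  "Prel ty \<eta> \<delta>T \<delta>X = {(x,y). x \<in> Pset \<eta> \<delta>T \<delta>X \<and> y \<in> Pset \<eta> \<delta>T \<delta>X \<and> Pequiv ty \<eta> \<delta>T \<delta>X x y}"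

definition Delta :: "nat \<Rightarrow> nat \<Rightarrow> int \<Rightarrow> nat \<Rightarrow> expo set" where
  "Delta q \<eta> \<delta>T \<delta>X = Mmon \<eta> \<delta>T \<delta>X ` Kset q \<eta> \<delta>T \<delta>X"

end

theory Submission
  imports Defs "HOL-Computational_Algebra.Polynomial"
begin

text \<open>On the \<open>\<bbbF>\<^sub>q\<close>-points of the Hirzebruch surface the coordinates \<open>t\<^sub>2\<close> and \<open>x\<^sub>2\<close> take every
  value while \<open>t\<^sub>1\<close> and \<open>x\<^sub>1\<close> take only the values 0 and 1. Hence two monomials are equivalent
  iff their \<open>T\<^sub>1\<close>- and \<open>X\<^sub>1\<close>-exponents vanish simultaneously and their \<open>T\<^sub>2\<close>- and \<open>X\<^sub>2\<close>-exponents
  define the same power map on \<open>\<bbbF>\<^sub>q\<close>, i.e. vanish simultaneously and agree modulo \<open>q - 1\<close>.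
  With this description one checks that \<open>p\<close> maps \<open>\<P>\<close> into \<open>\<K>\<close>, sends every point to an
  equivalent one, is constant on equivalence classes and fixes \<open>\<K>\<close>; such a retraction
  identifies \<open>\<P>/\<equiv>\<close> with \<open>\<K>\<close>, and \<open>M\<close> transports the result to monomials.\<close>

lemma card_field_ge_2: "2 \<le> CARD('a::{finite,field})"
proof -
  have "card {0::'a, 1} \<le> CARD('a)" by (intro card_mono) auto
  thus ?thesis by simp
qed

lemma field_pow_card_minus_1:
  fixes a :: "'a::{finite,field}"
  assumes "a \<noteq> 0"
  shows "a ^ (CARD('a) - 1) = 1"
proof -
  define S where "S = UNIV - {0::'a}"
  have "bij_betw ((*) a) S S"
    by (rule bij_betw_byWitness[where f' = "\<lambda>y. y / a"]) (use assms in \<open>auto simp: S_def\<close>)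
  hence "prod id S = prod ((*) a) S"
    using prod.reindex_bij_betw[of "(*) a" S S id] by simp
  also have "\<dots> = a ^ card S * prod id S" by (simp add: prod.distrib)
  finally have "prod id S = a ^ card S * prod id S" .
  moreover have "prod id S \<noteq> 0" by (simp add: S_def)
  moreover have "card S = CARD('a) - 1" by (simp add: S_def card_Diff_subset)
  ultimately show ?thesis by simp
qed

lemma card_field_le_unit_exponent:
  assumes "0 < s" and roots: "\<And>a::'a::{finite,field}. a \<noteq> 0 \<Longrightarrow> a ^ s = 1"
  shows "CARD('a) - 1 \<le> s"
proof -
  define f :: "'a poly" where "f = monom 1 s - 1"
  have deg: "degree f = s"
    unfolding f_def using \<open>0 < s\<close>
    by (simp add: degree_monom_eq degree_add_eq_left diff_conv_add_uminus del: add_uminus_conv_diff)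
  hence "f \<noteq> 0" using \<open>0 < s\<close> by auto
  have "UNIV - {0::'a} \<subseteq> {x. poly f x = 0}" using roots by (auto simp: f_def poly_monom)
  hence "card (UNIV - {0::'a}) \<le> card {x. poly f x = 0}" by (intro card_mono) auto
  also have "\<dots> \<le> s" using card_poly_roots_bound[OF \<open>f \<noteq> 0\<close>] deg by simp
  finally show ?thesis by (simp add: card_Diff_subset)
qed

lemma field_pow_mod_card_minus_1:
  fixes a :: "'a::{finite,field}"
  assumes "a \<noteq> 0"
  shows "a ^ n = a ^ (n mod (CARD('a) - 1))"
proof -
  define k where "k = CARD('a) - 1"
  have "a ^ n = a ^ (k * (n div k) + n mod k)" by simp
  also have "\<dots> = (a ^ k) ^ (n div k) * a ^ (n mod k)" by (simp only: power_add power_mult)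
  finally show ?thesis using field_pow_card_minus_1[OF assms] by (simp add: k_def)
qed

definition exp_equiv :: "nat \<Rightarrow> nat \<Rightarrow> nat \<Rightarrow> bool" where
  "exp_equiv q n m \<longleftrightarrow> (n = 0 \<longleftrightarrow> m = 0) \<and> n mod (q - 1) = m mod (q - 1)"

lemma field_power_fun_eq_iff:
  "(\<forall>a::'a::{finite,field}. a ^ n = a ^ m) \<longleftrightarrow> exp_equiv CARD('a) n m"
proof
  define k where "k = CARD('a) - 1"
  assume eq: "\<forall>a::'a. a ^ n = a ^ m"
  have "(0::'a) ^ n = 0 ^ m" using eq by blast
  hence zero: "n = 0 \<longleftrightarrow> m = 0" by (simp add: power_0_left split: if_splits)
  have mods: "a ^ (n mod k) = a ^ (m mod k)" if "a \<noteq> 0" for a :: 'a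
  proof -
    have "a ^ (n mod k) = a ^ n" using field_pow_mod_card_minus_1[OF that] by (simp add: k_def)
    also have "\<dots> = a ^ m" using eq by blast
    also have "\<dots> = a ^ (m mod k)" using field_pow_mod_card_minus_1[OF that] by (simp add: k_def)
    finally show ?thesis .
  qed
  have "0 < k" using card_field_ge_2[where 'a='a] by (simp add: k_def)
  have no_gap: False if "r < s" "s < k" and rs: "\<And>a::'a. a \<noteq> 0 \<Longrightarrow> a ^ r = a ^ s" for r s
  proof -
    have "a ^ (s - r) = 1" if "a \<noteq> 0" for a :: 'a
    proof -
      have "a ^ r * a ^ (s - r) = a ^ (r + (s - r))" by (simp only: power_add)
      also have "\<dots> = a ^ r * 1" using rs[OF \<open>a \<noteq> 0\<close>] \<open>r < s\<close> by simp
      finally show ?thesis using \<open>a \<noteq> 0\<close> by simp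
    qed
    hence "k \<le> s - r"
      using card_field_le_unit_exponent[where 'a='a and s="s - r"] \<open>r < s\<close> by (simp add: k_def)
    thus False using \<open>s < k\<close> by linarith
  qed
  have "n mod k = m mod k"
  proof (rule linorder_cases[of "n mod k" "m mod k"])
    assume "n mod k < m mod k"
    thus ?thesis using no_gap[OF _ mod_less_divisor[OF \<open>0 < k\<close>] mods] by blast
  next
    assume "m mod k < n mod k"
    thus ?thesis using no_gap[OF _ mod_less_divisor[OF \<open>0 < k\<close>] mods[symmetric]] by blast
  qed
  thus "exp_equiv CARD('a) n m" using zero by (simp add: exp_equiv_def k_def)
next
  assume equiv: "exp_equiv CARD('a) n m"
  show "\<forall>a::'a. a ^ n = a ^ m"
  proof
    fix a :: 'a
    show "a ^ n = a ^ m"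
    proof (cases "a = 0")
      case False
      thus ?thesis
        using equiv field_pow_mod_card_minus_1[OF False, of n] field_pow_mod_card_minus_1[OF False, of m]
        by (simp add: exp_equiv_def)
    qed (use equiv in \<open>simp add: exp_equiv_def power_0_left\<close>)
  qed
qed

lemma redmod_eq:
  assumes "2 \<le> q"
  shows "redmod q n = (if n mod (q - 1) = 0 then q - 1 else n mod (q - 1))"
  unfolding redmod_def
proof (rule the_equality)
  fix x assume x: "x \<in> {1..q - 1} \<and> x mod (q - 1) = n mod (q - 1)"
  show "x = (if n mod (q - 1) = 0 then q - 1 else n mod (q - 1))"
  proof (cases "x = q - 1")
    case False
    hence "x < q - 1" using x by simp
    hence "x mod (q - 1) = x" by simp
    thus ?thesis using x False by auto
  qed (use x in auto)
qed (use assms in \<open>auto simp: less_imp_le_nat\<close>)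

lemma
  assumes "2 \<le> q"
  shows redmod_ge_1: "1 \<le> redmod q n"
    and redmod_le_q_minus_1: "redmod q n \<le> q - 1"
    and mod_redmod: "redmod q n mod (q - 1) = n mod (q - 1)"
  using assms by (auto simp: redmod_eq less_imp_le_nat)

lemma redmod_le:
  assumes "2 \<le> q" "1 \<le> n"
  shows "redmod q n \<le> n"
proof (cases "n mod (q - 1) = 0")
  case True
  hence "q - 1 \<le> n" using assms by (intro dvd_imp_le) auto
  thus ?thesis using True assms by (simp add: redmod_eq)
qed (use assms in \<open>simp add: redmod_eq\<close>)

lemma redmod_id:
  assumes "2 \<le> q" "1 \<le> n" "n \<le> q - 1"
  shows "redmod q n = n"
  using assms by (cases "n = q - 1") (auto simp: redmod_eq)

lemma redmod_eq_iff:
  assumes "2 \<le> q"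
  shows "redmod q n = redmod q m \<longleftrightarrow> n mod (q - 1) = m mod (q - 1)"
proof
  assume "redmod q n = redmod q m"
  hence "redmod q n mod (q - 1) = redmod q m mod (q - 1)" by simp
  thus "n mod (q - 1) = m mod (q - 1)" by (simp only: mod_redmod[OF assms])
qed (simp add: redmod_eq[OF assms])

lemma exp_equiv_redmod:
  assumes "2 \<le> q" "n \<noteq> 0"
  shows "exp_equiv q (redmod q n) n"
  using assms redmod_ge_1[OF assms(1), of n] mod_redmod[OF assms(1), of n]
  by (auto simp: exp_equiv_def)

lemma mequiv_iff:
  "mequiv TYPE('a::{finite,field}) (c1, c2, d1, d2) (c1', c2', d1', d2') \<longleftrightarrow>
    (c1 = 0 \<longleftrightarrow> c1' = 0) \<and> (d1 = 0 \<longleftrightarrow> d1' = 0) \<and>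
    exp_equiv CARD('a) c2 c2' \<and> exp_equiv CARD('a) d2 d2'"
    (is "?equiv \<longleftrightarrow> _")
proof -
  have points: "(1, a, 1, b) \<in> hpoints" "((0::'a), 1, 1, b) \<in> hpoints"
    "((1::'a), a, 0, 1) \<in> hpoints" for a b :: 'a
    by (auto simp: hpoints_def)
  have zero_pow_eq: "(0::'a) ^ n = 0 ^ m \<longleftrightarrow> (n = 0 \<longleftrightarrow> m = 0)" for n m :: nat
    by (simp add: power_0_left)
  have "?equiv \<longleftrightarrow> (0::'a) ^ c1 = 0 ^ c1' \<and> (0::'a) ^ d1 = 0 ^ d1' \<and>
      (\<forall>a::'a. a ^ c2 = a ^ c2') \<and> (\<forall>b::'a. b ^ d2 = b ^ d2')"
  proof
    assume ?equiv
    hence "mon_eval pt (c1, c2, d1, d2) = mon_eval pt (c1', c2', d1', d2')"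
      if "pt \<in> hpoints" for pt :: "'a \<times> 'a \<times> 'a \<times> 'a"
      using that by (simp add: mequiv_def)
    thus "(0::'a) ^ c1 = 0 ^ c1' \<and> (0::'a) ^ d1 = 0 ^ d1' \<and>
      (\<forall>a::'a. a ^ c2 = a ^ c2') \<and> (\<forall>b::'a. b ^ d2 = b ^ d2')"
      using points(1)[of _ 1] points(1)[of 1] points(2)[of 1] points(3)[of 1]
      by (fastforce simp: mon_eval_def)
  qed (auto simp: mequiv_def hpoints_def mon_eval_def)
  thus ?thesis by (simp only: zero_pow_eq field_power_fun_eq_iff)
qed

lemma Pequiv_iff:
  assumes "(a, b) \<in> Pset \<eta> \<delta>T \<delta>X" "(a', b') \<in> Pset \<eta> \<delta>T \<delta>X"
  shows "Pequiv TYPE('a::{finite,field}) \<eta> \<delta>T \<delta>X (a, b) (a', b') \<longleftrightarrow>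
    (hdelta \<eta> \<delta>T \<delta>X - int \<eta> * int a - int b = 0 \<longleftrightarrow> hdelta \<eta> \<delta>T \<delta>X - int \<eta> * int a' - int b' = 0)
    \<and> (a = \<delta>X \<longleftrightarrow> a' = \<delta>X) \<and> exp_equiv CARD('a) b b' \<and> exp_equiv CARD('a) a a'"
  using assms unfolding Pequiv_def Mmon_def prod.case mequiv_iff Pset_def by auto

lemma equiv_Prel: "equiv (Pset \<eta> \<delta>T \<delta>X) (Prel ty \<eta> \<delta>T \<delta>X)"
  by (rule equivI) (auto simp: refl_on_def sym_def trans_def Prel_def Pequiv_def mequiv_def)

lemma bij_betw_Mmon: "bij_betw (Mmon \<eta> \<delta>T \<delta>X) (Pset \<eta> \<delta>T \<delta>X) (bideg_monos \<eta> \<delta>T \<delta>X)"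
proof (rule bij_betwI')
  show "Mmon \<eta> \<delta>T \<delta>X x = Mmon \<eta> \<delta>T \<delta>X y \<longleftrightarrow> x = y" for x y
    by (auto simp: Mmon_def split: prod.splits)
  show "Mmon \<eta> \<delta>T \<delta>X x \<in> bideg_monos \<eta> \<delta>T \<delta>X" if "x \<in> Pset \<eta> \<delta>T \<delta>X" for x
    using that by (auto simp: Mmon_def Pset_def bideg_monos_def hdelta_def of_nat_diff algebra_simps)
  show "\<exists>x\<in>Pset \<eta> \<delta>T \<delta>X. m = Mmon \<eta> \<delta>T \<delta>X x" if m: "m \<in> bideg_monos \<eta> \<delta>T \<delta>X" for m
  proof -
    obtain c1 c2 d1 d2 where m: "m = (c1, c2, d1, d2)"
      and deg: "int c1 + int c2 - int \<eta> * int d1 = \<delta>T" "d1 + d2 = \<delta>X"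
      using m by (cases m) (auto simp: bideg_monos_def)
    hence "(d2, c2) \<in> Pset \<eta> \<delta>T \<delta>X" "m = Mmon \<eta> \<delta>T \<delta>X (d2, c2)"
      by (auto simp: Pset_def Mmon_def hdelta_def algebra_simps)
    thus ?thesis by blast
  qed
qed

lemma retraction_quotient:
  assumes equiv: "equiv P R" and "K \<subseteq> P"
    and into: "\<And>x. x \<in> P \<Longrightarrow> p x \<in> K" and related: "\<And>x. x \<in> P \<Longrightarrow> (x, p x) \<in> R"
    and invariant: "\<And>x y. (x, y) \<in> R \<Longrightarrow> p x = p y" and fixed: "\<And>k. k \<in> K \<Longrightarrow> p k = k"
  shows "bij_betw (\<lambda>C. the_elem (p ` C)) (P // R) K"
    and "\<forall>x\<in>P. \<exists>!k\<in>K. (x, k) \<in> R"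
proof -
  have class_image: "p ` (R `` {x}) = {p x}" if "x \<in> P" for x
  proof
    show "p ` (R `` {x}) \<subseteq> {p x}" using invariant by fastforce
    show "{p x} \<subseteq> p ` (R `` {x})" using equiv_class_self[OF equiv that] by blast
  qed
  have same_class: "R `` {x} = R `` {y}" if "x \<in> P" "y \<in> P" "p x = p y" for x y
  proof -
    have "(x, p x) \<in> R" "(y, p x) \<in> R" using related[OF that(1)] related[OF that(2)] that(3) by simp_all
    hence "(x, y) \<in> R" using equiv unfolding equiv_def by (meson symD transD)
    thus ?thesis using equiv_class_eq[OF equiv] by blast
  qed
  show "bij_betw (\<lambda>C. the_elem (p ` C)) (P // R) K"
  proof (rule bij_betwI')
    show "the_elem (p ` C) = the_elem (p ` D) \<longleftrightarrow> C = D" if C: "C \<in> P // R" and D: "D \<in> P // R" for C D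
    proof -
      obtain x where x: "C = R `` {x}" "x \<in> P" using C by (rule quotientE)
      obtain y where y: "D = R `` {y}" "y \<in> P" using D by (rule quotientE)
      show ?thesis
      proof
        assume "the_elem (p ` C) = the_elem (p ` D)"
        hence "p x = p y" by (simp add: x y class_image)
        thus "C = D" using same_class[OF x(2) y(2)] by (simp add: x y)
      qed simp
    qed
    show "the_elem (p ` C) \<in> K" if "C \<in> P // R" for C
      using that by (rule quotientE) (simp add: class_image into)
    show "\<exists>C\<in>P // R. k = the_elem (p ` C)" if "k \<in> K" for k
    proof
      have "k \<in> P" using that \<open>K \<subseteq> P\<close> by blast
      thus "R `` {k} \<in> P // R" by (rule quotientI)
      show "k = the_elem (p ` (R `` {k}))" using class_image[OF \<open>k \<in> P\<close>] fixed[OF that] by simp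
    qed
  qed
  show "\<forall>x\<in>P. \<exists>!k\<in>K. (x, k) \<in> R"
  proof
    fix x assume "x \<in> P"
    show "\<exists>!k\<in>K. (x, k) \<in> R"
    proof (rule ex1I[of _ "p x"])
      show "p x \<in> K \<and> (x, p x) \<in> R" using into related \<open>x \<in> P\<close> by blast
      show "k = p x" if "k \<in> K \<and> (x, k) \<in> R" for k
        using that invariant[of x k] fixed[of k] by simp
    qed
  qed
qed

lemma unique_representative_image:
  assumes "bij_betw f A B" "K \<subseteq> A" "\<forall>x\<in>A. \<exists>!k\<in>K. E (f x) (f k)"
  shows "f ` K \<subseteq> B" and "\<forall>y\<in>B. \<exists>!d\<in>f ` K. E y d"
proof -
  show "f ` K \<subseteq> B" using assms(1,2) by (auto simp: bij_betw_def)
  show "\<forall>y\<in>B. \<exists>!d\<in>f ` K. E y d"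
  proof
    fix y assume "y \<in> B"
    then obtain x where "x \<in> A" "y = f x" using assms(1) by (auto simp: bij_betw_def)
    with assms(3) obtain k where k: "k \<in> K" "E y (f k)" "\<And>k'. k' \<in> K \<Longrightarrow> E y (f k') \<Longrightarrow> k' = k"
      by metis
    show "\<exists>!d\<in>f ` K. E y d" using k by blast
  qed
qed

lemma pmap_eq_Pair_iff:
  "pmap q \<eta> \<delta>T \<delta>X (a, b) = (d', c') \<longleftrightarrow>
    d' = (if a = 0 \<or> real a = Arat \<eta> \<delta>T \<delta>X then a else redmod q a) \<and>
    c' = (if b = 0 then 0
          else if int b = hdelta \<eta> \<delta>T \<delta>X - int \<eta> * int a then nat (hdelta \<eta> \<delta>T \<delta>X - int \<eta> * int d')
          else redmod q b)"
  by (auto simp: pmap_def Let_def)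

lemma fst_pmap_le:
  assumes "2 \<le> q" "pmap q \<eta> \<delta>T \<delta>X (a, b) = (d', c')"
  shows "d' \<le> a"
  using assms redmod_le[of q a] by (auto simp: pmap_eq_Pair_iff)

lemma exp_equiv_fst_pmap:
  assumes "2 \<le> q" "pmap q \<eta> \<delta>T \<delta>X (a, b) = (d', c')"
  shows "exp_equiv q d' a"
  using assms exp_equiv_redmod[OF assms(1), of a] by (auto simp: pmap_eq_Pair_iff exp_equiv_def)

context
  fixes \<eta> :: nat and \<delta>T :: int and \<delta>X :: nat
  assumes hdelta_nonneg: "0 \<le> hdelta \<eta> \<delta>T \<delta>X"
begin

abbreviation \<delta> where "\<delta> \<equiv> hdelta \<eta> \<delta>T \<delta>X"
abbreviation A where "A \<equiv> Arat \<eta> \<delta>T \<delta>X"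

lemma Arat_nonneg: "0 \<le> A"
  using hdelta_nonneg by (auto simp: Arat_def)

lemma pos_eta_if_neg: "\<delta>T < 0 \<Longrightarrow> 0 < \<eta>"
  using hdelta_nonneg by (cases "\<eta> = 0") (auto simp: hdelta_def)

lemma Arat_le: "A \<le> real \<delta>X"
proof (cases "0 \<le> \<delta>T")
  case False
  hence "real_of_int \<delta> \<le> real \<eta> * real \<delta>X" by (simp add: hdelta_def)
  thus ?thesis using False pos_eta_if_neg by (simp add: Arat_def pos_divide_le_eq mult.commute)
qed (simp add: Arat_def)

lemma Pset_fst_le_Arat:
  assumes "(a, b) \<in> Pset \<eta> \<delta>T \<delta>X"
  shows "real a \<le> A"
proof (cases "0 \<le> \<delta>T")
  case False
  have "int \<eta> * int a \<le> \<delta>" using assms by (simp add: Pset_def)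
  hence "real_of_int (int \<eta> * int a) \<le> real_of_int \<delta>" by (simp only: of_int_le_iff)
  thus ?thesis using False pos_eta_if_neg by (simp add: Arat_def pos_le_divide_eq mult.commute)
qed (use assms in \<open>simp add: Arat_def Pset_def\<close>)

lemma Pset_fst_less_if_neg:
  assumes "\<delta>T < 0" "(a, b) \<in> Pset \<eta> \<delta>T \<delta>X"
  shows "a < \<delta>X"
proof -
  have "int \<eta> * int a < int \<eta> * int \<delta>X" using assms by (simp add: Pset_def hdelta_def)
  thus ?thesis using pos_eta_if_neg[OF assms(1)] by (simp add: mult_less_cancel_left)
qed

lemma Pset_fst_eq_Arat_iff:
  assumes "(a, b) \<in> Pset \<eta> \<delta>T \<delta>X"
  shows "real a = A \<longleftrightarrow>
    (if 0 \<le> \<delta>T then a = \<delta>X else \<delta> - int \<eta> * int a - int b = 0 \<and> b = 0)"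
proof (cases "0 \<le> \<delta>T")
  case False
  have "real a = A \<longleftrightarrow> real_of_int (int \<eta> * int a) = real_of_int \<delta>"
    using False pos_eta_if_neg by (simp add: Arat_def eq_divide_eq mult.commute)
  also have "\<dots> \<longleftrightarrow> int \<eta> * int a = \<delta>" by (simp only: of_int_eq_iff)
  also have "\<dots> \<longleftrightarrow> \<delta> - int \<eta> * int a - int b = 0 \<and> b = 0"
    using assms by (auto simp: Pset_def)
  finally show ?thesis using False by simp
qed (simp add: Arat_def)

lemma fst_pmap_in_AX:
  assumes "2 \<le> q" "(a, b) \<in> Pset \<eta> \<delta>T \<delta>X" "pmap q \<eta> \<delta>T \<delta>X (a, b) = (d', c')"
  shows "d' \<in> AX q \<eta> \<delta>T \<delta>X"
proof (cases "a = 0 \<or> real a = A")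
  case True
  thus ?thesis using assms Arat_nonneg by (auto simp: pmap_eq_Pair_iff AX_def)
next
  case False
  hence "d' = redmod q a" using assms(3) by (simp add: pmap_eq_Pair_iff)
  moreover have "real d' \<le> A"
    using fst_pmap_le[OF assms(1,3)] Pset_fst_le_Arat[OF assms(2)] by linarith
  ultimately show ?thesis
    using redmod_le_q_minus_1[OF assms(1), of a] assms(1) by (auto simp: AX_def le_floor_iff)
qed

lemma snd_pmap_bound:
  assumes "2 \<le> q" "(a, b) \<in> Pset \<eta> \<delta>T \<delta>X" "pmap q \<eta> \<delta>T \<delta>X (a, b) = (d', c')"
  shows "int c' \<le> min (\<delta> - int \<eta> * int d') (int q) - 1 \<or> int c' = \<delta> - int \<eta> * int d'"
proof -
  have "\<delta> - int \<eta> * int a \<le> \<delta> - int \<eta> * int d'"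
    using fst_pmap_le[OF assms(1,3)] by (simp add: mult_left_mono)
  moreover have "int \<eta> * int a + int b \<le> \<delta>" using assms(2) by (simp add: Pset_def)
  ultimately show ?thesis
    using assms(1,3) redmod_le[OF assms(1), of b] redmod_le_q_minus_1[OF assms(1), of b]
    by (auto simp: pmap_eq_Pair_iff)
qed

lemma pmap_in_Kset:
  assumes "2 \<le> q" "x \<in> Pset \<eta> \<delta>T \<delta>X"
  shows "pmap q \<eta> \<delta>T \<delta>X x \<in> Kset q \<eta> \<delta>T \<delta>X"
proof -
  obtain a b d' c' where x: "x = (a, b)" and pm: "pmap q \<eta> \<delta>T \<delta>X (a, b) = (d', c')"
    by (metis prod.exhaust)
  show ?thesis
    using fst_pmap_in_AX[OF assms(1) _ pm] snd_pmap_bound[OF assms(1) _ pm] assms(2)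
    unfolding x pm Kset_def by simp
qed

lemma Kset_subset_Pset: "Kset q \<eta> \<delta>T \<delta>X \<subseteq> Pset \<eta> \<delta>T \<delta>X"
proof
  fix k assume "k \<in> Kset q \<eta> \<delta>T \<delta>X"
  then obtain a b where k: "k = (a, b)" "a \<in> AX q \<eta> \<delta>T \<delta>X"
    "int b \<le> min (\<delta> - int \<eta> * int a) (int q) - 1 \<or> int b = \<delta> - int \<eta> * int a"
    by (auto simp: Kset_def)
  have "real a \<le> A" using k(2) by (auto simp: AX_def le_floor_iff)
  hence "a \<le> \<delta>X" using Arat_le by simp
  thus "k \<in> Pset \<eta> \<delta>T \<delta>X" using k(1,3) by (auto simp: Pset_def)
qed

lemma pmap_Kset:
  assumes "2 \<le> q" "k \<in> Kset q \<eta> \<delta>T \<delta>X"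
  shows "pmap q \<eta> \<delta>T \<delta>X k = k"
proof -
  obtain a b where k: "k = (a, b)" "int a \<le> min \<lfloor>A\<rfloor> (int q - 1) \<or> real a = A"
    "int b \<le> min (\<delta> - int \<eta> * int a) (int q) - 1 \<or> int b = \<delta> - int \<eta> * int a"
    using assms(2) by (auto simp: Kset_def AX_def)
  have "(if a = 0 \<or> real a = A then a else redmod q a) = a"
    using k(2) redmod_id[OF assms(1), of a] by auto
  moreover have "(if b = 0 then 0 else if int b = \<delta> - int \<eta> * int a
      then nat (\<delta> - int \<eta> * int a) else redmod q b) = b"
    using k(3) redmod_id[OF assms(1), of b] by auto
  ultimately show ?thesis unfolding k(1) by (simp add: pmap_eq_Pair_iff)
qed

lemma fst_pmap_eq_iff:
  assumes "2 \<le> q" "(a, b) \<in> Pset \<eta> \<delta>T \<delta>X" "pmap q \<eta> \<delta>T \<delta>X (a, b) = (d', c')"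
  shows "d' = \<delta>X \<longleftrightarrow> a = \<delta>X"
proof (cases "a = 0 \<or> real a = A")
  case False
  have "a < \<delta>X"
    using False Pset_fst_eq_Arat_iff[OF assms(2)] Pset_fst_less_if_neg[OF _ assms(2)] assms(2)
    by (cases "0 \<le> \<delta>T") (auto simp: Pset_def)
  thus ?thesis using fst_pmap_le[OF assms(1,3)] by simp
qed (use assms(3) in \<open>auto simp: pmap_eq_Pair_iff\<close>)

lemma exp_equiv_snd_pmap:
  assumes "2 \<le> q" "(a, b) \<in> Pset \<eta> \<delta>T \<delta>X" "pmap q \<eta> \<delta>T \<delta>X (a, b) = (d', c')"
  shows "exp_equiv q c' b"
proof (cases "b \<noteq> 0 \<and> int b = \<delta> - int \<eta> * int a")
  case True
  have "d' \<le> a" using fst_pmap_le[OF assms(1,3)] .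
  have "c' = nat (\<delta> - int \<eta> * int d')" using True assms(3) by (simp add: pmap_eq_Pair_iff)
  moreover have "int \<eta> * int d' \<le> int \<eta> * int a" using \<open>d' \<le> a\<close> by (simp add: mult_left_mono)
  ultimately have "int c' = \<delta> - int \<eta> * int d'" using True by simp
  also have "\<dots> = int b + int \<eta> * (int a - int d')" using True by (simp add: algebra_simps)
  also have "\<dots> = int (b + \<eta> * (a - d'))" using \<open>d' \<le> a\<close> by (simp add: of_nat_diff)
  finally have c': "c' = b + \<eta> * (a - d')" by (simp only: of_nat_eq_iff)
  have "(q - 1) dvd (a - d')"
    using exp_equiv_fst_pmap[OF assms(1,3)] mod_eq_dvd_iff_nat[OF \<open>d' \<le> a\<close>, of "q - 1"]
    by (simp add: exp_equiv_def)
  then obtain t where "a - d' = (q - 1) * t" by (rule dvdE)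
  hence "c' = b + \<eta> * t * (q - 1)" using c' by (simp add: ac_simps)
  thus ?thesis using True by (simp add: exp_equiv_def)
next
  case False
  hence "c' = (if b = 0 then 0 else redmod q b)" using assms(3) by (auto simp: pmap_eq_Pair_iff)
  thus ?thesis using exp_equiv_redmod[OF assms(1), of b] by (simp add: exp_equiv_def)
qed

text \<open>In the only case where \<open>p\<close> lowers \<open>d\<^sub>2\<close> while the \<open>T\<^sub>1\<close>-exponent vanishes and \<open>c\<^sub>2 = 0\<close>,
  the degree condition forces \<open>\<eta> = 0\<close>, so the \<open>T\<^sub>1\<close>-exponent stays 0.\<close>

lemma T1_exponent_pmap_eq_0_iff:
  assumes "2 \<le> q" "(a, b) \<in> Pset \<eta> \<delta>T \<delta>X" "pmap q \<eta> \<delta>T \<delta>X (a, b) = (d', c')"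
  shows "\<delta> - int \<eta> * int d' - int c' = 0 \<longleftrightarrow> \<delta> - int \<eta> * int a - int b = 0"
proof -
  have "d' \<le> a" using fst_pmap_le[OF assms(1,3)] .
  hence lowered: "\<delta> - int \<eta> * int a \<le> \<delta> - int \<eta> * int d'" by (simp add: mult_left_mono)
  have bound: "int \<eta> * int a + int b \<le> \<delta>" "a \<le> \<delta>X" using assms(2) by (auto simp: Pset_def)
  show ?thesis
  proof (cases "b = 0")
    case b0: True
    hence "c' = 0" using assms(3) by (simp add: pmap_eq_Pair_iff)
    show ?thesis
    proof (cases "a = 0 \<or> real a = A")
      case True
      thus ?thesis using b0 \<open>c' = 0\<close> assms(3) by (simp add: pmap_eq_Pair_iff)
    next
      case False
      have "\<eta> = 0" if T1: "\<delta> - int \<eta> * int a = 0"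
      proof -
        have "0 \<le> \<delta>T" "a \<noteq> \<delta>X"
          using False b0 T1 Pset_fst_eq_Arat_iff[OF assms(2)] by (auto split: if_splits)
        hence "int \<eta> * int \<delta>X \<le> int \<eta> * int a" "a < \<delta>X"
          using T1 bound(2) by (auto simp: hdelta_def)
        thus "\<eta> = 0" by (simp add: mult_le_cancel_left)
      qed
      thus ?thesis using b0 \<open>c' = 0\<close> lowered bound(1) by auto
    qed
  next
    case False
    thus ?thesis
      using assms(3) lowered bound(1) redmod_le[OF assms(1), of b] by (auto simp: pmap_eq_Pair_iff)
  qed
qed

lemma pmap_eq_if_invariants_eq:
  assumes "2 \<le> q" and P: "(a, b) \<in> Pset \<eta> \<delta>T \<delta>X" "(a', b') \<in> Pset \<eta> \<delta>T \<delta>X"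
    and T1: "\<delta> - int \<eta> * int a - int b = 0 \<longleftrightarrow> \<delta> - int \<eta> * int a' - int b' = 0"
    and X1: "a = \<delta>X \<longleftrightarrow> a' = \<delta>X"
    and T2: "exp_equiv q b b'" and X2: "exp_equiv q a a'"
  shows "pmap q \<eta> \<delta>T \<delta>X (a, b) = pmap q \<eta> \<delta>T \<delta>X (a', b')"
proof -
  have zero: "a = 0 \<longleftrightarrow> a' = 0" "b = 0 \<longleftrightarrow> b' = 0" using T2 X2 by (auto simp: exp_equiv_def)
  have "real a = A \<longleftrightarrow> real a' = A"
    using Pset_fst_eq_Arat_iff[OF P(1)] Pset_fst_eq_Arat_iff[OF P(2)] T1 X1 zero(2) by simp
  hence "(if a = 0 \<or> real a = A then a else redmod q a) = (if a' = 0 \<or> real a' = A then a' else redmod q a')"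
    using zero(1) X2 redmod_eq_iff[OF assms(1)] by (auto simp: exp_equiv_def)
  moreover have "int b = \<delta> - int \<eta> * int a \<longleftrightarrow> int b' = \<delta> - int \<eta> * int a'" using T1 by auto
  ultimately show ?thesis
    using zero(2) T2 redmod_eq_iff[OF assms(1)] by (simp add: pmap_def Let_def exp_equiv_def)
qed

lemma Pequiv_pmap:
  assumes "x \<in> Pset \<eta> \<delta>T \<delta>X"
  shows "Pequiv TYPE('a::{finite,field}) \<eta> \<delta>T \<delta>X x (pmap CARD('a) \<eta> \<delta>T \<delta>X x)"
proof -
  obtain a b d' c' where x: "x = (a, b)" and pm: "pmap CARD('a) \<eta> \<delta>T \<delta>X (a, b) = (d', c')"
    by (metis prod.exhaust)
  have "(d', c') \<in> Pset \<eta> \<delta>T \<delta>X"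
    using pmap_in_Kset[OF card_field_ge_2[where 'a='a] assms] Kset_subset_Pset x pm by auto
  thus ?thesis
    using assms x pm card_field_ge_2[where 'a='a] T1_exponent_pmap_eq_0_iff fst_pmap_eq_iff
      exp_equiv_snd_pmap exp_equiv_fst_pmap
    by (simp add: Pequiv_iff exp_equiv_def)
qed

lemma pmap_eq_if_Pequiv:
  assumes "x \<in> Pset \<eta> \<delta>T \<delta>X" "y \<in> Pset \<eta> \<delta>T \<delta>X"
    and "Pequiv TYPE('a::{finite,field}) \<eta> \<delta>T \<delta>X x y"
  shows "pmap CARD('a) \<eta> \<delta>T \<delta>X x = pmap CARD('a) \<eta> \<delta>T \<delta>X y"
  using assms pmap_eq_if_invariants_eq[OF card_field_ge_2[where 'a='a]] Pequiv_iff[where 'a='a]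
  by (cases x, cases y) simp

end

theorem proposition2p13:
  fixes \<eta> :: nat and \<delta>T :: int and \<delta>X :: nat
  assumes "\<delta>T + int \<eta> * int \<delta>X \<ge> 0"
  shows "((\<forall>x\<in>Pset \<eta> \<delta>T \<delta>X. \<forall>y\<in>Pset \<eta> \<delta>T \<delta>X.
            Pequiv TYPE('a::{finite,field}) \<eta> \<delta>T \<delta>X x y \<longrightarrow>
            pmap (CARD('a)) \<eta> \<delta>T \<delta>X x = pmap (CARD('a)) \<eta> \<delta>T \<delta>X y)
       \<and> bij_betw (\<lambda>C. the_elem (pmap (CARD('a)) \<eta> \<delta>T \<delta>X ` C))
           (Pset \<eta> \<delta>T \<delta>X // Prel TYPE('a) \<eta> \<delta>T \<delta>X) (Kset (CARD('a)) \<eta> \<delta>T \<delta>X))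
    \<and> (Kset (CARD('a)) \<eta> \<delta>T \<delta>X \<subseteq> Pset \<eta> \<delta>T \<delta>X
       \<and> (\<forall>x\<in>Pset \<eta> \<delta>T \<delta>X. \<exists>!k\<in>Kset (CARD('a)) \<eta> \<delta>T \<delta>X. Pequiv TYPE('a) \<eta> \<delta>T \<delta>X x k))
    \<and> (Delta (CARD('a)) \<eta> \<delta>T \<delta>X \<subseteq> bideg_monos \<eta> \<delta>T \<delta>X
       \<and> (\<forall>m\<in>bideg_monos \<eta> \<delta>T \<delta>X. \<exists>!d\<in>Delta (CARD('a)) \<eta> \<delta>T \<delta>X. mequiv TYPE('a) m d))"
proof -
  let ?P = "Pset \<eta> \<delta>T \<delta>X" and ?K = "Kset CARD('a) \<eta> \<delta>T \<delta>X"
    and ?p = "pmap CARD('a) \<eta> \<delta>T \<delta>X" and ?R = "Prel TYPE('a) \<eta> \<delta>T \<delta>X"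
  have nonneg: "0 \<le> hdelta \<eta> \<delta>T \<delta>X" using assms by (simp add: hdelta_def)
  have invariant: "\<forall>x\<in>?P. \<forall>y\<in>?P. Pequiv TYPE('a) \<eta> \<delta>T \<delta>X x y \<longrightarrow> ?p x = ?p y"
    using pmap_eq_if_Pequiv[OF nonneg] by blast
  have KP: "?K \<subseteq> ?P" using Kset_subset_Pset[OF nonneg] .
  have into: "\<And>x. x \<in> ?P \<Longrightarrow> ?p x \<in> ?K"
    using pmap_in_Kset[OF nonneg card_field_ge_2] .
  have related: "\<And>x. x \<in> ?P \<Longrightarrow> (x, ?p x) \<in> ?R"
    using into KP Pequiv_pmap[OF nonneg] by (auto simp: Prel_def)
  have class_invariant: "\<And>x y. (x, y) \<in> ?R \<Longrightarrow> ?p x = ?p y"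
    using invariant by (auto simp: Prel_def)
  have fixed: "\<And>k. k \<in> ?K \<Longrightarrow> ?p k = k"
    using pmap_Kset[OF nonneg card_field_ge_2] .
  note retraction = retraction_quotient[OF equiv_Prel KP into related class_invariant fixed]
  have representatives: "\<forall>x\<in>?P. \<exists>!k\<in>?K. Pequiv TYPE('a) \<eta> \<delta>T \<delta>X x k"
    using retraction(2) KP by (auto simp: Prel_def)
  have "Delta CARD('a) \<eta> \<delta>T \<delta>X \<subseteq> bideg_monos \<eta> \<delta>T \<delta>X \<and>
    (\<forall>m\<in>bideg_monos \<eta> \<delta>T \<delta>X. \<exists>!d\<in>Delta CARD('a) \<eta> \<delta>T \<delta>X. mequiv TYPE('a) m d)"
    using unique_representative_image[OF bij_betw_Mmon KP] representatives
    by (simp add: Delta_def Pequiv_def)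
  thus ?thesis using invariant retraction(1) KP representatives by blast
qed

end
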